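(* Let $G$ be a graph, $k$ a positive integer and $\mathbb{F}$ a field whose characteristic is either $0$ or a positive number not dividing $k$. Suppose the polynomials $y_v^k - 1$ ($v\in V(G)$) and $\sum_{j=0}^{k-1} y_u^{j} y_v^{k-1-j}$ ($\{u,v\}\in E(G)$) have a polynomial calculus refutation of degree $d$ over $\mathbb{F}$. Then $\mathbb{F}$ can be extended to a field $\mathbb{E}$ containing a primitive $k$th root of unity $w$, and the polynomials $$\sum_{j=1}^{k} x_{v,j} - 1 \ (v \in V(G)),\qquad x_{v,j}x_{v,j'} \ (v \in V(G),\ j\neq j' \in [k]),\qquad x_{u,j}x_{v,j}\ (\{u,v\} \in E(G),\ j \in [k])$$ have a polynomial calculus refutation over $\mathbb{E}$ of degree $\max\{2k,d\}$.
   Context: Polynomial calculus over a field $\mathbb{F}$: a derivation of $r$ from a set $S$ of polynomials is a sequence $p_1,\dots,p_\tau=r$ in which each $p_t$ is an element of $S$, a linear combination $\alpha p_i+\beta p_j$ ($i,j<t$, $\alpha,\beta$ field elements), a product $x p_i$ ($i<t$, $x$ a variable), or (for the system in the $\{0,1\}$-variables $x_{v,j}$) a Boolean axiom $x^2-x$. For the system in the variables $y_v$ no Boolean axioms are used. A refutation is a derivation of $1$; its degree is the maximum total degree of its polynomials. *)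

theory Defs
  imports "HOL-Library.Poly_Mapping" "HOL-Algebra.Algebraic_Closure_Type"
begin

type_synonym ('v, 'a) mpoly = "('v \<Rightarrow>\<^sub>0 nat) \<Rightarrow>\<^sub>0 'a"

definition mconst :: "'a::comm_ring_1 \<Rightarrow> ('v, 'a) mpoly" where
  "mconst c = Poly_Mapping.single 0 c"

definition mvar :: "'v \<Rightarrow> ('v, 'a::comm_ring_1) mpoly" where
  "mvar x = Poly_Mapping.single (Poly_Mapping.single x 1) 1"

definition mon_deg :: "('v \<Rightarrow>\<^sub>0 nat) \<Rightarrow> nat" where
  "mon_deg m = (\<Sum>x\<in>Poly_Mapping.keys m. Poly_Mapping.lookup m x)"

definition tdeg :: "('v, 'a::comm_ring_1) mpoly \<Rightarrow> nat" where
  "tdeg p = (if Poly_Mapping.keys p = {} then 0 else Max (mon_deg ` Poly_Mapping.keys p))"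

definition pc_step :: "bool \<Rightarrow> ('v, 'a::comm_ring_1) mpoly set \<Rightarrow> ('v, 'a) mpoly list
    \<Rightarrow> ('v, 'a) mpoly \<Rightarrow> bool" where
  "pc_step boolax S prev p \<longleftrightarrow>
     p \<in> S
   \<or> (\<exists>q\<in>set prev. \<exists>r\<in>set prev. \<exists>\<alpha> \<beta>. p = mconst \<alpha> * q + mconst \<beta> * r)
   \<or> (\<exists>q\<in>set prev. \<exists>x. p = mvar x * q)
   \<or> (boolax \<and> (\<exists>x. p = mvar x ^ 2 - mvar x))"

definition pc_derivation :: "bool \<Rightarrow> ('v, 'a::comm_ring_1) mpoly set \<Rightarrow> ('v, 'a) mpoly list \<Rightarrow> bool" where
  "pc_derivation boolax S ps \<longleftrightarrow> (\<forall>t<length ps. pc_step boolax S (take t ps) (ps ! t))"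

definition pc_refutation :: "bool \<Rightarrow> ('v, 'a::comm_ring_1) mpoly set \<Rightarrow> nat \<Rightarrow> bool" where
  "pc_refutation boolax S d \<longleftrightarrow>
     (\<exists>ps. pc_derivation boolax S ps \<and> ps \<noteq> [] \<and> last ps = 1 \<and> (\<forall>p\<in>set ps. tdeg p \<le> d))"

definition primitive_root_of_unity :: "nat \<Rightarrow> 'a::comm_ring_1 \<Rightarrow> bool" where
  "primitive_root_of_unity k w \<longleftrightarrow> w ^ k = 1 \<and> (\<forall>j. 0 < j \<and> j < k \<longrightarrow> w ^ j \<noteq> 1)"

definition simple_graph :: "'v set \<Rightarrow> 'v set set \<Rightarrow> bool" where
  "simple_graph V E \<longleftrightarrow> finite V \<and> (\<forall>e\<in>E. e \<subseteq> V \<and> card e = 2)"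

text \<open>The k-colouring system in the y-variables (roots-of-unity encoding).\<close>
definition y_system :: "'v set \<Rightarrow> 'v set set \<Rightarrow> nat \<Rightarrow> ('v, 'a::comm_ring_1) mpoly set" where
  "y_system V E k =
     {mvar v ^ k - 1 | v. v \<in> V}
   \<union> {\<Sum>j<k. mvar u ^ j * mvar v ^ (k - 1 - j) | u v. {u, v} \<in> E}"

text \<open>The k-colouring system in the boolean variables x_{v,j}, j \<in> {1..k}.\<close>
definition x_system :: "'v set \<Rightarrow> 'v set set \<Rightarrow> nat \<Rightarrow> ('v \<times> nat, 'a::comm_ring_1) mpoly set" where
  "x_system V E k =
     {(\<Sum>j\<in>{1..k}. mvar (v, j)) - 1 | v. v \<in> V}
   \<union> {mvar (v, j) * mvar (v, j') | v j j'. v \<in> V \<and> j \<in> {1..k} \<and> j' \<in> {1..k} \<and> j \<noteq> j'}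
   \<union> {mvar (u, j) * mvar (v, j) | u v j. {u, v} \<in> E \<and> j \<in> {1..k}}"

end

theory Submission
  imports Defs
begin

text \<open>
  Substitute y_v := sum_j w^j x_(v,j) for a primitive k-th root of unity w, which exists in the
  algebraic closure because k is nonzero there. Substituting linear forms for the variables maps
  a refutation of degree d to a sequence of polynomials each of which is derivable in degree
  max (2k) d from the images of the axioms: multiplying by y_v becomes k multiplications by
  single variables. In the Boolean system, the Boolean axioms and the axioms x_(v,j) x_(v,j')
  give (sum_j c_j x_(v,j))^n = sum_j c_j^n x_(v,j) in degree n + 1. So the image of y_v^k - 1
  reduces to the vertex axiom, and the image of an edge polynomial reduces to
  sum_(j,j') (sum_i w^(i j) w^((k-1-i) j')) x_(u,j) x_(v,j'), in which the off-diagonal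
  coefficients are geometric sums over two distinct k-th roots of unity and vanish, leaving
  multiples of the edge axioms.
\<close>

section \<open>Primitive roots of unity\<close>

lemma primitive_root_of_unity_dvd:
  assumes w: "primitive_root_of_unity k w" and "k > 0" and "w ^ j = 1"
  shows "k dvd j"
proof -
  have "w ^ j = (w ^ k) ^ (j div k) * w ^ (j mod k)"
    by (metis div_mult_mod_eq mult.commute power_add power_mult)
  hence "w ^ (j mod k) = 1"
    using w \<open>w ^ j = 1\<close> by (simp add: primitive_root_of_unity_def)
  moreover have "j mod k < k"
    using \<open>k > 0\<close> by simp
  ultimately have "j mod k = 0"
    using w unfolding primitive_root_of_unity_def by (metis neq0_conv)
  thus ?thesis
    by (simp add: dvd_eq_mod_eq_0)
qed

lemma power_gcd_eq_one:
  assumes "(x::'a::comm_ring_1) ^ a = 1" and "x ^ b = 1"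
  shows "x ^ gcd a b = 1"
proof (cases "a = 0")
  case True
  thus ?thesis using assms by simp
next
  case False
  then obtain s r where sr: "a * s = b * r + gcd a b"
    using bezout_nat by blast
  have "1 = x ^ (a * s)"
    using assms by (simp add: power_mult)
  also have "\<dots> = (x ^ b) ^ r * x ^ gcd a b"
    by (simp add: sr power_add power_mult)
  finally show ?thesis
    using assms by simp
qed

lemma primitive_root_of_unity_prime_root:
  assumes p: "prime p" and w: "primitive_root_of_unity m w" and "m > 0"
    and z: "z ^ p = w" and "z ^ m \<noteq> 1"
  shows "primitive_root_of_unity (p * m) z"
  unfolding primitive_root_of_unity_def
proof (intro conjI allI impI)
  show "z ^ (p * m) = 1"
    using w z by (simp add: power_mult primitive_root_of_unity_def)
  fix j
  assume j: "0 < j \<and> j < p * m"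
  show "z ^ j \<noteq> 1"
  proof
    assume "z ^ j = 1"
    hence "w ^ j = 1"
      using z by (metis mult.commute power_mult power_one)
    then obtain t where t: "j = m * t"
      using primitive_root_of_unity_dvd[OF w \<open>m > 0\<close>] by blast
    have "0 < t" "t < p"
      using j t \<open>m > 0\<close> by auto
    hence "\<not> p dvd t"
      using nat_dvd_not_less by blast
    hence "coprime t p"
      using prime_imp_coprime[OF p] coprime_commute by blast
    have "(z ^ m) ^ t = 1"
      using \<open>z ^ j = 1\<close> t by (simp add: power_mult)
    moreover have "(z ^ m) ^ p = 1"
      using w z by (metis mult.commute power_mult primitive_root_of_unity_def)
    ultimately have "(z ^ m) ^ gcd t p = 1"
      by (rule power_gcd_eq_one)
    thus False
      using \<open>coprime t p\<close> \<open>z ^ m \<noteq> 1\<close> by simp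
  qed
qed

lemma nontrivial_root_of_unity_exists:
  assumes "2 \<le> p" and "of_nat p \<noteq> (0 :: 'a)"
  obtains \<zeta> :: "'a::alg_closed_field" where "\<zeta> ^ p = 1" and "\<zeta> \<noteq> 1"
proof -
  obtain \<zeta> :: 'a where "(\<Sum>i\<le>p - 1. \<zeta> ^ i) = 0"
    using alg_closed[of "p - 1" "\<lambda>_. 1"] assms(1) by auto
  moreover have "{..p - 1} = {..<p}"
    using assms(1) by auto
  ultimately have sum: "(\<Sum>i<p. \<zeta> ^ i) = 0"
    by simp
  show ?thesis
  proof
    show "\<zeta> ^ p = 1"
      using power_diff_1_eq[of \<zeta> p] sum by simp
    show "\<zeta> \<noteq> 1"
      using sum assms(2) by auto
  qed
qed

lemma primitive_root_of_unity_prime_mult: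
  fixes w :: "'a::alg_closed_field"
  assumes p: "prime p" "of_nat p \<noteq> (0::'a)" and w: "primitive_root_of_unity m w" and "m > 0"
  shows "\<exists>z::'a. primitive_root_of_unity (p * m) z"
proof -
  have "2 \<le> p"
    using p(1) prime_ge_2_nat by blast
  obtain z :: 'a where z: "z ^ p = w"
    using nth_root_exists[of p w] \<open>2 \<le> p\<close> by auto
  show ?thesis
  proof (cases "z ^ m = 1")
    case False
    thus ?thesis
      using primitive_root_of_unity_prime_root[OF p(1) w \<open>m > 0\<close> z] by blast
  next
    case True
    \<comment> \<open>then \<open>p\<close> does not divide \<open>m\<close>, and \<open>z\<close> times a nontrivial \<open>p\<close>-th root of unity works instead\<close>
    have "\<not> p dvd m"
    proof
      assume "p dvd m"
      then obtain m' where m': "m = p * m'" ..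
      hence "0 < m'" "m' < m"
        using \<open>m > 0\<close> \<open>2 \<le> p\<close> n_less_m_mult_n[of m' p] by auto
      moreover have "w ^ m' = 1"
        using True z m' by (simp add: power_mult)
      ultimately show False
        using w by (auto simp: primitive_root_of_unity_def)
    qed
    hence "coprime p m"
      by (rule prime_imp_coprime[OF p(1)])
    obtain \<zeta> :: 'a where \<zeta>: "\<zeta> ^ p = 1" "\<zeta> \<noteq> 1"
      using nontrivial_root_of_unity_exists[OF \<open>2 \<le> p\<close> p(2)] by blast
    have "\<zeta> ^ m \<noteq> 1"
      using power_gcd_eq_one[OF \<zeta>(1), of m] \<open>coprime p m\<close> \<zeta>(2) by auto
    hence "(z * \<zeta>) ^ m \<noteq> 1"
      using True by (simp add: power_mult_distrib)
    moreover have "(z * \<zeta>) ^ p = w"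
      using z \<zeta>(1) by (simp add: power_mult_distrib)
    ultimately show ?thesis
      using primitive_root_of_unity_prime_root[OF p(1) w \<open>m > 0\<close>] by blast
  qed
qed

lemma primitive_root_of_unity_exists:
  assumes "k > 0" and "of_nat k \<noteq> (0::'a::alg_closed_field)"
  shows "\<exists>w::'a. primitive_root_of_unity k w"
  using assms
proof (induction k rule: less_induct)
  case (less k)
  show ?case
  proof (cases "k = 1")
    case True
    thus ?thesis
      by (intro exI[of _ 1]) (auto simp: primitive_root_of_unity_def)
  next
    case False
    then obtain p where "prime p" "p dvd k"
      using prime_factor_nat by blast
    then obtain m where k: "k = p * m"
      by (auto elim: dvdE)
    have "m > 0" "m < k"
      using k less.prems(1) prime_gt_1_nat[OF \<open>prime p\<close>] n_less_m_mult_n[of m p] by auto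
    moreover have "of_nat m \<noteq> (0::'a)" "of_nat p \<noteq> (0::'a)"
      using less.prems(2) k by auto
    ultimately obtain w :: 'a where "primitive_root_of_unity m w"
      using less.IH by blast
    thus ?thesis
      using primitive_root_of_unity_prime_mult[OF \<open>prime p\<close> \<open>of_nat p \<noteq> 0\<close>] \<open>m > 0\<close> k by blast
  qed
qed

lemma primitive_root_of_unity_inj_on:
  fixes w :: "'a::idom"
  assumes w: "primitive_root_of_unity k w"
  shows "inj_on (\<lambda>j. w ^ j) {1..k}"
proof (rule linorder_inj_onI')
  fix i j
  assume "i \<in> {1..k}" "j \<in> {1..k}" "i < j"
  hence "w \<noteq> 0"
    using w by (auto simp: primitive_root_of_unity_def zero_power)
  show "w ^ i \<noteq> w ^ j"
  proof
    assume "w ^ i = w ^ j"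
    moreover have "w ^ j = w ^ i * w ^ (j - i)"
      using \<open>i < j\<close> by (simp flip: power_add)
    moreover have "w ^ i \<noteq> 0"
      using \<open>w \<noteq> 0\<close> by simp
    ultimately have "w ^ (j - i) = 1"
      using mult_cancel_left1 by metis
    thus False
      using w \<open>i < j\<close> \<open>i \<in> {1..k}\<close> \<open>j \<in> {1..k}\<close>
      by (auto simp: primitive_root_of_unity_def)
  qed
qed

lemma distinct_roots_of_unity_sum:
  fixes a b :: "'a::idom"
  assumes "a ^ k = 1" and "b ^ k = 1" and "a \<noteq> b"
  shows "(\<Sum>i<k. a ^ i * b ^ (k - 1 - i)) = 0"
proof -
  have "(a - b) * (\<Sum>i<k. b ^ (k - Suc i) * a ^ i) = 0"
    using assms(1,2) by (simp flip: power_diff_sumr2)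
  thus ?thesis
    using assms(3) by (simp add: mult.commute)
qed

section \<open>Total degree\<close>

lemma mconst_0 [simp]: "mconst 0 = 0"
  by (simp add: mconst_def)

lemma mconst_1 [simp]: "mconst 1 = 1"
  by (simp add: mconst_def)

lemma mconst_add: "mconst (a + b) = mconst a + mconst b"
  by (simp add: mconst_def single_add)

lemma mconst_mult: "mconst (a * b) = mconst a * mconst b"
  by (simp add: mconst_def mult_single)

lemma mconst_uminus: "mconst (- a) = - mconst a"
  by (simp add: mconst_def single_uminus)

lemma mconst_sum: "mconst (sum f A) = (\<Sum>x\<in>A. mconst (f x))"
  by (induction A rule: infinite_finite_induct) (simp_all add: mconst_add)

lemma mon_deg_add: "mon_deg (a + b) = mon_deg a + mon_deg b"
proof -
  let ?S = "Poly_Mapping.keys a \<union> Poly_Mapping.keys b"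
  have "mon_deg m = (\<Sum>x\<in>?S. Poly_Mapping.lookup m x)" if "Poly_Mapping.keys m \<subseteq> ?S" for m
    unfolding mon_deg_def using that by (intro sum.mono_neutral_left) (auto simp: in_keys_iff)
  moreover have "Poly_Mapping.keys (a + b) \<subseteq> ?S"
    by (rule keys_add)
  ultimately show ?thesis
    by (simp add: lookup_add sum.distrib)
qed

lemma mon_deg_zero [simp]: "mon_deg 0 = 0"
  by (simp add: mon_deg_def)

lemma mon_deg_single [simp]: "mon_deg (Poly_Mapping.single x n) = n"
  by (simp add: mon_deg_def)

lemma tdeg_le_iff: "tdeg p \<le> D \<longleftrightarrow> (\<forall>m\<in>Poly_Mapping.keys p. mon_deg m \<le> D)"
  unfolding tdeg_def by (auto simp: Max_le_iff)

lemma mon_deg_le_tdeg: "m \<in> Poly_Mapping.keys p \<Longrightarrow> mon_deg m \<le> tdeg p"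
  using tdeg_le_iff[of p "tdeg p"] by blast

lemma tdeg_add_le: "tdeg p \<le> D \<Longrightarrow> tdeg q \<le> D \<Longrightarrow> tdeg (p + q) \<le> D"
  using keys_add[of p q] by (auto simp: tdeg_le_iff)

lemma tdeg_diff_le: "tdeg p \<le> D \<Longrightarrow> tdeg q \<le> D \<Longrightarrow> tdeg (p - q) \<le> D"
  using keys_diff[of p q] by (auto simp: tdeg_le_iff)

lemma tdeg_sum_le: "(\<And>i. i \<in> A \<Longrightarrow> tdeg (f i) \<le> D) \<Longrightarrow> tdeg (sum f A) \<le> D"
  using keys_sum[of f A] by (auto simp: tdeg_le_iff)

lemma tdeg_mult_le: "tdeg (p * q) \<le> tdeg p + tdeg q"
proof -
  have "mon_deg m \<le> tdeg p + tdeg q" if m: "m \<in> Poly_Mapping.keys (p * q)" for m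
  proof -
    obtain a b where "m = a + b" "a \<in> Poly_Mapping.keys p" "b \<in> Poly_Mapping.keys q"
      using keys_mult[of p q] m by blast
    thus ?thesis
      by (simp add: mon_deg_add add_mono mon_deg_le_tdeg)
  qed
  thus ?thesis
    by (simp add: tdeg_le_iff)
qed

lemma tdeg_mconst [simp]: "tdeg (mconst c) = 0"
  by (simp add: tdeg_def mconst_def)

lemma tdeg_one [simp]: "tdeg 1 = 0"
  using tdeg_mconst[of 1] by simp

lemma tdeg_mvar_le: "tdeg (mvar x) \<le> 1"
  by (simp add: tdeg_def mvar_def)

lemma tdeg_mconst_mult_le: "tdeg (mconst c * p) \<le> tdeg p"
  using tdeg_mult_le[of "mconst c" p] by simp

lemma tdeg_mvar_mult_le:
  fixes p :: "('v, 'a::comm_ring_1) mpoly"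
  shows "tdeg (mvar x * p) \<le> tdeg p + 1"
proof -
  have "tdeg (mvar x :: ('v, 'a) mpoly) \<le> 1"
    by (rule tdeg_mvar_le)
  thus ?thesis
    using tdeg_mult_le[of "mvar x" p] by linarith
qed

lemma tdeg_power_le: "tdeg (p ^ n) \<le> n * tdeg p"
proof (induction n)
  case (Suc n)
  thus ?case
    using tdeg_mult_le[of p "p ^ n"] by simp
qed simp

lemma tdeg_prod_le: "tdeg (prod f A) \<le> (\<Sum>i\<in>A. tdeg (f i))"
proof (induction A rule: infinite_finite_induct)
  case (insert x F)
  thus ?case
    using tdeg_mult_le[of "f x" "prod f F"] by simp
qed simp_all

lemma tdeg_linear_form_le: "tdeg (\<Sum>j\<in>J. mconst (c j) * mvar (x j)) \<le> 1"
  by (rule tdeg_sum_le) (rule order.trans[OF tdeg_mconst_mult_le tdeg_mvar_le])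

lemma tdeg_linear_form_power_le: "tdeg ((\<Sum>j\<in>J. mconst (c j) * mvar (x j)) ^ n) \<le> n"
proof -
  have "tdeg ((\<Sum>j\<in>J. mconst (c j) * mvar (x j)) ^ n) \<le> n * tdeg (\<Sum>j\<in>J. mconst (c j) * mvar (x j))"
    by (rule tdeg_power_le)
  also have "\<dots> \<le> n * 1"
    by (rule mult_le_mono2[OF tdeg_linear_form_le])
  finally show ?thesis
    by simp
qed

lemma tdeg_mvar_mult_ge:
  assumes "p \<noteq> 0"
  shows "tdeg p + 1 \<le> tdeg (mvar x * p)"
proof -
  have ne: "Poly_Mapping.keys p \<noteq> {}"
    using assms by simp
  have "Max (mon_deg ` Poly_Mapping.keys p) \<in> mon_deg ` Poly_Mapping.keys p"
    using ne by (intro Max_in) auto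
  then obtain m where m: "m \<in> Poly_Mapping.keys p" "mon_deg m = tdeg p"
    using ne unfolding tdeg_def by (metis imageE)
  have "Poly_Mapping.lookup (mvar x * p) (Poly_Mapping.single x 1 + m) = Poly_Mapping.lookup p m"
    unfolding mvar_def lookup_mult lookup_single by (simp add: when_mult)
  hence "Poly_Mapping.single x 1 + m \<in> Poly_Mapping.keys (mvar x * p)"
    using m(1) by (simp add: in_keys_iff)
  hence "mon_deg (Poly_Mapping.single x 1 + m) \<le> tdeg (mvar x * p)"
    by (rule mon_deg_le_tdeg)
  thus ?thesis
    using m(2) by (simp add: mon_deg_add)
qed


section \<open>Derivability in bounded degree\<close>

definition pc_derivable :: "bool \<Rightarrow> ('v, 'a::comm_ring_1) mpoly set \<Rightarrow> nat \<Rightarrow> ('v, 'a) mpoly \<Rightarrow> bool" where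
  "pc_derivable boolax S D p \<longleftrightarrow>
     (\<exists>ps. pc_derivation boolax S ps \<and> ps \<noteq> [] \<and> last ps = p \<and> (\<forall>q\<in>set ps. tdeg q \<le> D))"

lemma pc_refutation_iff_derivable_one: "pc_refutation b S D \<longleftrightarrow> pc_derivable b S D 1"
  by (simp add: pc_refutation_def pc_derivable_def)

lemma pc_derivation_snoc_iff:
  "pc_derivation b S (ps @ [p]) \<longleftrightarrow> pc_derivation b S ps \<and> pc_step b S ps p"
  by (auto simp: pc_derivation_def nth_append less_Suc_eq)

lemma pc_derivation_append:
  assumes "pc_derivation b S ps"
  shows "pc_derivation b S qs \<Longrightarrow> pc_derivation b S (ps @ qs)"
proof (induction qs rule: rev_induct)
  case (snoc q qs)
  hence "pc_derivation b S (ps @ qs)" and "pc_step b S qs q"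
    by (simp_all add: pc_derivation_snoc_iff)
  moreover from \<open>pc_step b S qs q\<close> have "pc_step b S (ps @ qs) q"
    unfolding pc_step_def by (metis UnCI set_append)
  ultimately show ?case
    using pc_derivation_snoc_iff[of b S "ps @ qs" q] by simp
qed (use assms in simp)

lemma pc_derivable_tdeg: "pc_derivable b S D p \<Longrightarrow> tdeg p \<le> D"
  unfolding pc_derivable_def by auto

lemma pc_derivable_by_step:
  assumes "pc_derivation b S ps" and "pc_step b S ps p"
    and "\<forall>q\<in>set ps. tdeg q \<le> D" and "tdeg p \<le> D"
  shows "pc_derivable b S D p"
  unfolding pc_derivable_def
  using assms by (intro exI[of _ "ps @ [p]"]) (auto simp: pc_derivation_snoc_iff)

lemma pc_derivable_axiom: "p \<in> S \<Longrightarrow> tdeg p \<le> D \<Longrightarrow> pc_derivable b S D p"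
  by (rule pc_derivable_by_step[of _ _ "[]"]) (auto simp: pc_derivation_def pc_step_def)

lemma pc_derivable_boolean:
  fixes S :: "('v, 'a::comm_ring_1) mpoly set" and x :: 'v
  assumes "2 \<le> D"
  shows "pc_derivable True S D (mvar x ^ 2 - mvar x)"
proof (rule pc_derivable_by_step[of _ _ "[]"])
  have "tdeg (mvar x :: ('v, 'a) mpoly) \<le> 1"
    by (rule tdeg_mvar_le)
  moreover have "tdeg (mvar x ^ 2 :: ('v, 'a) mpoly) \<le> 2 * tdeg (mvar x :: ('v, 'a) mpoly)"
    by (rule tdeg_power_le)
  ultimately show "tdeg (mvar x ^ 2 - mvar x :: ('v, 'a) mpoly) \<le> D"
    using assms by (intro tdeg_diff_le) auto
qed (auto simp: pc_derivation_def pc_step_def)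

lemma pc_derivable_lincomb:
  assumes "pc_derivable b S D p" and "pc_derivable b S D q"
  shows "pc_derivable b S D (mconst \<alpha> * p + mconst \<beta> * q)"
proof -
  obtain ps qs where
    ps: "pc_derivation b S ps" "p \<in> set ps" "\<forall>r\<in>set ps. tdeg r \<le> D" and
    qs: "pc_derivation b S qs" "q \<in> set qs" "\<forall>r\<in>set qs. tdeg r \<le> D"
    using assms unfolding pc_derivable_def by (metis last_in_set)
  show ?thesis
  proof (rule pc_derivable_by_step[of _ _ "ps @ qs"])
    show "pc_derivation b S (ps @ qs)"
      using pc_derivation_append ps(1) qs(1) by blast
    show "pc_step b S (ps @ qs) (mconst \<alpha> * p + mconst \<beta> * q)"
      unfolding pc_step_def using ps(2) qs(2) by (intro disjI2 disjI1) auto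
    show "tdeg (mconst \<alpha> * p + mconst \<beta> * q) \<le> D"
      using assms[THEN pc_derivable_tdeg] tdeg_mconst_mult_le
      by (intro tdeg_add_le) (blast intro: le_trans)+
  qed (use ps(3) qs(3) in auto)
qed

lemma pc_derivable_mvar_mult:
  assumes "pc_derivable b S D p" and "tdeg (mvar x * p) \<le> D"
  shows "pc_derivable b S D (mvar x * p)"
proof -
  obtain ps where ps: "pc_derivation b S ps" "p \<in> set ps" "\<forall>r\<in>set ps. tdeg r \<le> D"
    using assms(1) unfolding pc_derivable_def by (metis last_in_set)
  have "pc_step b S ps (mvar x * p)"
    unfolding pc_step_def using ps(2) by (intro disjI2 disjI1) auto
  thus ?thesis
    by (rule pc_derivable_by_step[OF ps(1) _ ps(3) assms(2)])
qed

lemma pc_derivable_add: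
  "pc_derivable b S D p \<Longrightarrow> pc_derivable b S D q \<Longrightarrow> pc_derivable b S D (p + q)"
  using pc_derivable_lincomb[of b S D p q 1 1] by simp

lemma pc_derivable_smult: "pc_derivable b S D p \<Longrightarrow> pc_derivable b S D (mconst c * p)"
  using pc_derivable_lincomb[of b S D p p c 0] by simp

lemma pc_derivable_zero: "pc_derivable b S D p \<Longrightarrow> pc_derivable b S D 0"
  using pc_derivable_smult[of b S D p 0] by simp

lemma pc_derivable_diff:
  "pc_derivable b S D p \<Longrightarrow> pc_derivable b S D q \<Longrightarrow> pc_derivable b S D (p - q)"
  using pc_derivable_lincomb[of b S D p q 1 "- 1"] by (simp add: mconst_uminus)

lemma pc_derivable_sum:
  assumes "pc_derivable b S D 0" and "\<And>i. i \<in> I \<Longrightarrow> pc_derivable b S D (f i)"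
  shows "pc_derivable b S D (sum f I)"
  using assms(2)
proof (induction I rule: infinite_finite_induct)
  case (insert i I)
  thus ?case
    by (simp add: pc_derivable_add)
qed (simp_all add: assms(1))

lemma pc_derivable_linear_form_mult:
  assumes "pc_derivable b S D r" and "tdeg r < D"
  shows "pc_derivable b S D ((\<Sum>j\<in>J. mconst (c j) * mvar (x j)) * r)"
proof -
  have "pc_derivable b S D (mconst (c j) * (mvar (x j) * r))" for j
    using assms tdeg_mvar_mult_le[of "x j" r]
    by (intro pc_derivable_smult pc_derivable_mvar_mult) auto
  hence "pc_derivable b S D (\<Sum>j\<in>J. mconst (c j) * (mvar (x j) * r))"
    using pc_derivable_zero[OF assms(1)] by (intro pc_derivable_sum)
  thus ?thesis
    by (simp add: sum_distrib_right mult.assoc)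
qed

lemma pc_derivable_linear_form_power_mult:
  assumes "pc_derivable b S D r" and "tdeg r + n \<le> D"
  shows "pc_derivable b S D ((\<Sum>j\<in>J. mconst (c j) * mvar (x j)) ^ n * r)"
  using assms(2)
proof (induction n)
  case 0
  thus ?case
    using assms(1) by simp
next
  case (Suc n)
  let ?l = "\<Sum>j\<in>J. mconst (c j) * mvar (x j)"
  have "tdeg (?l ^ n * r) \<le> n + tdeg r"
    using tdeg_mult_le[of "?l ^ n" r] tdeg_linear_form_power_le[of c x J n] by linarith
  hence "pc_derivable b S D (?l * (?l ^ n * r))"
    using Suc by (intro pc_derivable_linear_form_mult) auto
  thus ?case
    by (simp add: mult.assoc)
qed


section \<open>Substitution of polynomials for variables\<close>

definition mon_eval :: "('v \<Rightarrow> 'c::comm_monoid_mult) \<Rightarrow> ('v \<Rightarrow>\<^sub>0 nat) \<Rightarrow> 'c" where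
  "mon_eval L m = (\<Prod>v\<in>Poly_Mapping.keys m. L v ^ Poly_Mapping.lookup m v)"

definition mpoly_eval :: "('a::comm_ring_1 \<Rightarrow> 'c::comm_ring_1) \<Rightarrow> ('v \<Rightarrow> 'c) \<Rightarrow> ('v, 'a) mpoly \<Rightarrow> 'c" where
  "mpoly_eval h L p = (\<Sum>m\<in>Poly_Mapping.keys p. h (Poly_Mapping.lookup p m) * mon_eval L m)"

lemma mon_eval_add: "mon_eval L (a + b) = mon_eval L a * mon_eval L b"
proof -
  let ?S = "Poly_Mapping.keys a \<union> Poly_Mapping.keys b"
  have "mon_eval L m = (\<Prod>v\<in>?S. L v ^ Poly_Mapping.lookup m v)" if "Poly_Mapping.keys m \<subseteq> ?S" for m
    unfolding mon_eval_def using that by (intro prod.mono_neutral_left) (auto simp: in_keys_iff)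
  moreover have "Poly_Mapping.keys (a + b) \<subseteq> ?S"
    by (rule keys_add)
  ultimately show ?thesis
    by (simp add: lookup_add power_add prod.distrib)
qed

lemma mon_eval_zero [simp]: "mon_eval L 0 = 1"
  by (simp add: mon_eval_def)

lemma mon_eval_single [simp]: "mon_eval L (Poly_Mapping.single v 1) = L v"
  by (simp add: mon_eval_def)

lemma tdeg_mon_eval_le:
  assumes "\<And>v. tdeg (L v) \<le> 1"
  shows "tdeg (mon_eval L m) \<le> mon_deg m"
proof -
  have "tdeg (mon_eval L m) \<le> (\<Sum>v\<in>Poly_Mapping.keys m. tdeg (L v ^ Poly_Mapping.lookup m v))"
    unfolding mon_eval_def by (rule tdeg_prod_le)
  also have "\<dots> \<le> (\<Sum>v\<in>Poly_Mapping.keys m. Poly_Mapping.lookup m v)"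
  proof (rule sum_mono)
    fix v
    have "tdeg (L v ^ Poly_Mapping.lookup m v) \<le> Poly_Mapping.lookup m v * tdeg (L v)"
      by (rule tdeg_power_le)
    also have "\<dots> \<le> Poly_Mapping.lookup m v"
      using mult_le_mono2[OF assms[of v]] by simp
    finally show "tdeg (L v ^ Poly_Mapping.lookup m v) \<le> Poly_Mapping.lookup m v" .
  qed
  finally show ?thesis
    by (simp add: mon_deg_def)
qed

lemma tdeg_mpoly_eval_le:
  assumes "\<And>v. tdeg (L v) \<le> 1"
  shows "tdeg (mpoly_eval (\<lambda>c. mconst (g c)) L p) \<le> tdeg p"
  unfolding mpoly_eval_def
proof (rule tdeg_sum_le)
  fix m
  assume "m \<in> Poly_Mapping.keys p"
  have "tdeg (mconst (g (Poly_Mapping.lookup p m)) * mon_eval L m) \<le> tdeg (mon_eval L m)"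
    by (rule tdeg_mconst_mult_le)
  also have "\<dots> \<le> mon_deg m"
    by (rule tdeg_mon_eval_le[OF assms])
  also have "\<dots> \<le> tdeg p"
    by (rule mon_deg_le_tdeg) fact
  finally show "tdeg (mconst (g (Poly_Mapping.lookup p m)) * mon_eval L m) \<le> tdeg p" .
qed

lemma mpoly_sum_single: "p = (\<Sum>m\<in>Poly_Mapping.keys p. Poly_Mapping.single m (Poly_Mapping.lookup p m))"
proof (rule poly_mapping_eqI)
  fix n
  have "Poly_Mapping.lookup (\<Sum>m\<in>Poly_Mapping.keys p. Poly_Mapping.single m (Poly_Mapping.lookup p m)) n
      = (\<Sum>m\<in>Poly_Mapping.keys p. if m = n then Poly_Mapping.lookup p m else 0)"
    by (simp add: lookup_sum lookup_single when_def)
  also have "\<dots> = Poly_Mapping.lookup p n"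
    by (simp add: sum.delta' in_keys_iff)
  finally show "Poly_Mapping.lookup p n =
      Poly_Mapping.lookup (\<Sum>m\<in>Poly_Mapping.keys p. Poly_Mapping.single m (Poly_Mapping.lookup p m)) n"
    by simp
qed

locale comm_ring_hom =
  fixes h :: "'a::comm_ring_1 \<Rightarrow> 'c::comm_ring_1"
  assumes hom_add: "h (a + b) = h a + h b"
    and hom_mult: "h (a * b) = h a * h b"
    and hom_one: "h 1 = 1"
begin

lemma hom_zero: "h 0 = 0"
  using hom_add[of 0 0] by simp

lemma mpoly_eval_superset:
  assumes "finite M" and "Poly_Mapping.keys p \<subseteq> M"
  shows "mpoly_eval h L p = (\<Sum>m\<in>M. h (Poly_Mapping.lookup p m) * mon_eval L m)"
  unfolding mpoly_eval_def
  using assms by (intro sum.mono_neutral_left) (auto simp: in_keys_iff hom_zero)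

lemma mpoly_eval_add: "mpoly_eval h L (p + q) = mpoly_eval h L p + mpoly_eval h L q"
proof -
  let ?M = "Poly_Mapping.keys p \<union> Poly_Mapping.keys q"
  have "Poly_Mapping.keys (p + q) \<subseteq> ?M"
    by (rule keys_add)
  thus ?thesis
    by (simp add: mpoly_eval_superset[of ?M] lookup_add hom_add distrib_right sum.distrib)
qed

lemma mpoly_eval_zero [simp]: "mpoly_eval h L 0 = 0"
  by (simp add: mpoly_eval_def)

lemma mpoly_eval_sum: "mpoly_eval h L (sum f A) = (\<Sum>x\<in>A. mpoly_eval h L (f x))"
  by (induction A rule: infinite_finite_induct) (simp_all add: mpoly_eval_add)

lemma hom_uminus: "h (- a) = - h a"
  using hom_add[of a "- a"] hom_zero by (simp add: add_eq_0_iff)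

lemma mpoly_eval_uminus: "mpoly_eval h L (- p) = - mpoly_eval h L p"
  by (simp add: mpoly_eval_def lookup_uminus hom_uminus sum_negf)

lemma mpoly_eval_diff: "mpoly_eval h L (p - q) = mpoly_eval h L p - mpoly_eval h L q"
  using mpoly_eval_add[of L p "- q"] by (simp add: mpoly_eval_uminus)

lemma mpoly_eval_single: "mpoly_eval h L (Poly_Mapping.single m c) = h c * mon_eval L m"
  by (simp add: mpoly_eval_superset[of "{m}"])

lemma mpoly_eval_mult: "mpoly_eval h L (p * q) = mpoly_eval h L p * mpoly_eval h L q"
proof -
  let ?P = "Poly_Mapping.keys p" and ?Q = "Poly_Mapping.keys q"
  let ?p = "Poly_Mapping.lookup p" and ?q = "Poly_Mapping.lookup q"
  have "p * q = (\<Sum>m\<in>?P. Poly_Mapping.single m (?p m)) * (\<Sum>n\<in>?Q. Poly_Mapping.single n (?q n))"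
    using mpoly_sum_single[of p] mpoly_sum_single[of q] by simp
  also have "\<dots> = (\<Sum>m\<in>?P. \<Sum>n\<in>?Q. Poly_Mapping.single (m + n) (?p m * ?q n))"
    by (simp add: sum_product mult_single)
  finally have pq: "p * q = \<dots>" .
  have "mpoly_eval h L (p * q) =
      (\<Sum>m\<in>?P. \<Sum>n\<in>?Q. h (?p m) * mon_eval L m * (h (?q n) * mon_eval L n))"
    unfolding pq by (simp add: mpoly_eval_sum mpoly_eval_single hom_mult mon_eval_add mult_ac)
  also have "\<dots> = mpoly_eval h L p * mpoly_eval h L q"
    by (simp add: mpoly_eval_def sum_product)
  finally show ?thesis .
qed

lemma mpoly_eval_mconst: "mpoly_eval h L (mconst c) = h c"
  using mpoly_eval_single[of L 0 c] by (simp add: mconst_def)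

lemma mpoly_eval_one [simp]: "mpoly_eval h L 1 = 1"
  using mpoly_eval_single[of L 0 1] by (simp add: hom_one)

lemma mpoly_eval_mvar: "mpoly_eval h L (mvar v) = L v"
  by (simp only: mvar_def mpoly_eval_single hom_one mon_eval_single mult_1_left)

lemma mpoly_eval_power: "mpoly_eval h L (p ^ n) = mpoly_eval h L p ^ n"
  by (induction n) (simp_all add: mpoly_eval_mult)

end

lemma comm_ring_hom_mconst: "comm_ring_hom g \<Longrightarrow> comm_ring_hom (\<lambda>c. mconst (g c))"
  unfolding comm_ring_hom_def by (simp add: mconst_add mconst_mult)

lemma comm_ring_hom_to_ac: "comm_ring_hom to_ac"
  by unfold_locales simp_all


section \<open>Transferring refutations along a substitution\<close>

lemma pc_step_mpoly_eval:
  fixes g :: "'a::comm_ring_1 \<Rightarrow> 'b::comm_ring_1" and L :: "'v \<Rightarrow> ('w, 'b) mpoly"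
  defines "\<phi> \<equiv> mpoly_eval (\<lambda>c. mconst (g c)) L"
  assumes "comm_ring_hom g"
    and linear: "\<And>v. tdeg (L v) \<le> 1"
    and mult: "\<And>v r. pc_derivable b T D r \<Longrightarrow> tdeg r < D \<Longrightarrow> pc_derivable b T D (L v * r)"
    and axioms: "\<And>p. p \<in> S \<Longrightarrow> tdeg p \<le> d \<Longrightarrow> pc_derivable b T D (\<phi> p)"
    and "d \<le> D"
    and step: "pc_step False S ps p" and prev: "\<forall>q\<in>set ps. pc_derivable b T D (\<phi> q)"
    and "tdeg p \<le> d"
  shows "pc_derivable b T D (\<phi> p)"
proof -
  interpret coeff: comm_ring_hom "\<lambda>c. mconst (g c) :: ('w, 'b) mpoly"
    using \<open>comm_ring_hom g\<close> by (rule comm_ring_hom_mconst)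
  from step consider (axiom) "p \<in> S"
    | (lincomb) q r \<alpha> \<beta> where "q \<in> set ps" "r \<in> set ps" "p = mconst \<alpha> * q + mconst \<beta> * r"
    | (mvar_mult) q x where "q \<in> set ps" "p = mvar x * q"
    unfolding pc_step_def by blast
  thus ?thesis
  proof cases
    case axiom
    thus ?thesis
      using axioms \<open>tdeg p \<le> d\<close> by blast
  next
    case lincomb
    hence "\<phi> p = mconst (g \<alpha>) * \<phi> q + mconst (g \<beta>) * \<phi> r"
      unfolding \<phi>_def by (simp add: coeff.mpoly_eval_add coeff.mpoly_eval_mult coeff.mpoly_eval_mconst)
    moreover have "pc_derivable b T D (\<phi> q)" and "pc_derivable b T D (\<phi> r)"
      using prev lincomb(1,2) by auto
    ultimately show ?thesis
      by (simp add: pc_derivable_lincomb)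
  next
    case mvar_mult
    show ?thesis
    proof (cases "q = 0")
      case True
      thus ?thesis
        using mvar_mult prev by auto
    next
      case False
      \<comment> \<open>the degree of \<open>x q\<close> is exactly one more than that of \<open>q\<close>, which leaves room to multiply by \<open>L x\<close>\<close>
      have "tdeg (\<phi> q) \<le> tdeg q"
        unfolding \<phi>_def by (rule tdeg_mpoly_eval_le) (rule linear)
      moreover have "tdeg (mvar x * q) \<le> d"
        using mvar_mult(2) \<open>tdeg p \<le> d\<close> by simp
      ultimately have "tdeg (\<phi> q) + 1 \<le> d"
        using tdeg_mvar_mult_ge[OF False, of x] by linarith
      thus ?thesis
        using mult[of "\<phi> q" x] prev mvar_mult \<open>d \<le> D\<close> unfolding \<phi>_def
        by (simp add: coeff.mpoly_eval_mult coeff.mpoly_eval_mvar)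
    qed
  qed
qed

lemma pc_refutation_mpoly_eval:
  fixes g :: "'a::comm_ring_1 \<Rightarrow> 'b::comm_ring_1" and L :: "'v \<Rightarrow> ('w, 'b) mpoly"
  assumes "comm_ring_hom g"
    and "\<And>v. tdeg (L v) \<le> 1"
    and "\<And>v r. pc_derivable b T D r \<Longrightarrow> tdeg r < D \<Longrightarrow> pc_derivable b T D (L v * r)"
    and "\<And>p. p \<in> S \<Longrightarrow> tdeg p \<le> d \<Longrightarrow>
      pc_derivable b T D (mpoly_eval (\<lambda>c. mconst (g c)) L p)"
    and "d \<le> D"
    and "pc_refutation False S d"
  shows "pc_refutation b T D"
proof -
  interpret coeff: comm_ring_hom "\<lambda>c. mconst (g c) :: ('w, 'b) mpoly"
    using assms(1) by (rule comm_ring_hom_mconst)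
  let ?\<phi> = "mpoly_eval (\<lambda>c. mconst (g c)) L"
  obtain ps where ps: "pc_derivation False S ps" "ps \<noteq> []" "last ps = 1" "\<forall>p\<in>set ps. tdeg p \<le> d"
    using assms(6) unfolding pc_refutation_def by blast
  have "\<forall>p\<in>set ps. pc_derivable b T D (?\<phi> p)"
    using ps(1,4)
  proof (induction ps rule: rev_induct)
    case (snoc p ps)
    hence "\<forall>q\<in>set ps. pc_derivable b T D (?\<phi> q)" and "pc_step False S ps p"
      by (simp_all add: pc_derivation_snoc_iff)
    moreover have "tdeg p \<le> d"
      using snoc.prems(2) by simp
    ultimately have "pc_derivable b T D (?\<phi> p)"
      using pc_step_mpoly_eval[OF assms(1-5)] by blast
    thus ?case
      using \<open>\<forall>q\<in>set ps. pc_derivable b T D (?\<phi> q)\<close> by simp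
  qed simp
  hence "pc_derivable b T D (?\<phi> 1)"
    using ps(2,3) last_in_set by metis
  thus ?thesis
    by (simp add: pc_refutation_iff_derivable_one)
qed


section \<open>Roots of unity in the Boolean encoding\<close>

definition vertex_form :: "nat \<Rightarrow> (nat \<Rightarrow> 'a::comm_ring_1) \<Rightarrow> 'v \<Rightarrow> ('v \<times> nat, 'a) mpoly" where
  "vertex_form k c v = (\<Sum>j\<in>{1..k}. mconst (c j) * mvar (v, j))"

lemma tdeg_vertex_form_le: "tdeg (vertex_form k c v) \<le> 1"
  unfolding vertex_form_def by (rule tdeg_linear_form_le)

lemma tdeg_vertex_form_power_le: "tdeg (vertex_form k c v ^ n) \<le> n"
  unfolding vertex_form_def by (rule tdeg_linear_form_power_le)

lemma pc_derivable_vertex_form_mult: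
  "pc_derivable b S D r \<Longrightarrow> tdeg r < D \<Longrightarrow> pc_derivable b S D (vertex_form k c v * r)"
  unfolding vertex_form_def by (rule pc_derivable_linear_form_mult)

lemma pc_derivable_vertex_form_power_mult:
  "pc_derivable b S D r \<Longrightarrow> tdeg r + n \<le> D \<Longrightarrow> pc_derivable b S D (vertex_form k c v ^ n * r)"
  unfolding vertex_form_def by (rule pc_derivable_linear_form_power_mult)

lemma tdeg_mvar_mult_mvar_le: "tdeg (mvar x * mvar y :: ('v, 'a::comm_ring_1) mpoly) \<le> 2"
proof -
  have "tdeg (mvar y :: ('v, 'a) mpoly) \<le> 1"
    by (rule tdeg_mvar_le)
  thus ?thesis
    using tdeg_mvar_mult_le[of x "mvar y :: ('v, 'a) mpoly"] by linarith
qed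

lemma pc_derivable_x_vertex:
  fixes V :: "'v set"
  assumes "v \<in> V" and "1 \<le> D"
  shows "pc_derivable b (x_system V E k) D ((\<Sum>j\<in>{1..k}. mvar (v, j)) - 1)"
proof (rule pc_derivable_axiom)
  show "(\<Sum>j\<in>{1..k}. mvar (v, j)) - 1 \<in> x_system V E k"
    using assms(1) unfolding x_system_def by blast
  have "tdeg (\<Sum>j\<in>{1..k}. mvar (v, j) :: ('v \<times> nat, 'a) mpoly) \<le> 1"
    by (rule tdeg_sum_le) (rule tdeg_mvar_le)
  thus "tdeg ((\<Sum>j\<in>{1..k}. mvar (v, j)) - 1 :: ('v \<times> nat, 'a) mpoly) \<le> D"
    using assms(2) by (intro tdeg_diff_le) auto
qed

lemma pc_derivable_x_pair:
  assumes "v \<in> V" and "j \<in> {1..k}" and "j' \<in> {1..k}" and "j \<noteq> j'" and "2 \<le> D"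
  shows "pc_derivable b (x_system V E k) D (mvar (v, j) * mvar (v, j'))"
proof (rule pc_derivable_axiom)
  show "mvar (v, j) * mvar (v, j') \<in> x_system V E k"
    using assms(1-4) unfolding x_system_def by blast
  show "tdeg (mvar (v, j) * mvar (v, j')) \<le> D"
    using tdeg_mvar_mult_mvar_le assms(5) by (rule order.trans)
qed

lemma pc_derivable_x_edge:
  assumes "{u, v} \<in> E" and "j \<in> {1..k}" and "2 \<le> D"
  shows "pc_derivable b (x_system V E k) D (mvar (u, j) * mvar (v, j))"
proof (rule pc_derivable_axiom)
  show "mvar (u, j) * mvar (v, j) \<in> x_system V E k"
    using assms(1,2) unfolding x_system_def by blast
  show "tdeg (mvar (u, j) * mvar (v, j)) \<le> D"
    using tdeg_mvar_mult_mvar_le assms(3) by (rule order.trans)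
qed

lemma vertex_form_mult_eq:
  "vertex_form k a v * vertex_form k b v =
     vertex_form k (\<lambda>j. a j * b j) v
     + (\<Sum>j\<in>{1..k}. mconst (a j * b j) * (mvar (v, j) ^ 2 - mvar (v, j)))
     + (\<Sum>j\<in>{1..k}. \<Sum>j'\<in>{1..k} - {j}. mconst (a j * b j') * (mvar (v, j) * mvar (v, j')))"
proof -
  let ?J = "{1..k}"
  let ?t = "\<lambda>j j'. mconst (a j * b j') * (mvar (v, j) * mvar (v, j'))"
  have "vertex_form k a v * vertex_form k b v = (\<Sum>j\<in>?J. \<Sum>j'\<in>?J. ?t j j')"
    unfolding vertex_form_def sum_product by (simp add: mconst_mult mult_ac)
  also have "\<dots> = (\<Sum>j\<in>?J. ?t j j + (\<Sum>j'\<in>?J - {j}. ?t j j'))"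
    by (rule sum.cong[OF refl]) (simp add: sum.remove)
  also have "\<dots> = (\<Sum>j\<in>?J. ?t j j) + (\<Sum>j\<in>?J. \<Sum>j'\<in>?J - {j}. ?t j j')"
    by (rule sum.distrib)
  also have "(\<Sum>j\<in>?J. ?t j j) = vertex_form k (\<lambda>j. a j * b j) v
      + (\<Sum>j\<in>?J. mconst (a j * b j) * (mvar (v, j) ^ 2 - mvar (v, j)))"
    unfolding vertex_form_def by (simp add: power2_eq_square right_diff_distrib sum_subtractf)
  finally show ?thesis .
qed

lemma pc_derivable_vertex_form_mult_reduce:
  fixes V :: "'v set" and a b :: "nat \<Rightarrow> 'a::comm_ring_1"
  assumes "v \<in> V" and "2 \<le> D"
  shows "pc_derivable True (x_system V E k) D
    (vertex_form k a v * vertex_form k b v - vertex_form k (\<lambda>j. a j * b j) v)"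
proof -
  let ?X = "x_system V E k :: ('v \<times> nat, 'a) mpoly set"
  have zero: "pc_derivable True ?X D 0"
    using pc_derivable_zero[OF pc_derivable_boolean[OF assms(2)]] .
  have "pc_derivable True ?X D (\<Sum>j\<in>{1..k}. mconst (a j * b j) * (mvar (v, j) ^ 2 - mvar (v, j)))"
    using assms(2) by (intro pc_derivable_sum[OF zero] pc_derivable_smult pc_derivable_boolean)
  moreover have "pc_derivable True ?X D
      (\<Sum>j\<in>{1..k}. \<Sum>j'\<in>{1..k} - {j}. mconst (a j * b j') * (mvar (v, j) * mvar (v, j')))"
    using assms by (intro pc_derivable_sum[OF zero] pc_derivable_smult pc_derivable_x_pair) auto
  ultimately show ?thesis
    unfolding vertex_form_mult_eq by (simp add: pc_derivable_add)
qed

lemma pc_derivable_vertex_form_power: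
  fixes V :: "'v set" and c :: "nat \<Rightarrow> 'a::comm_ring_1"
  assumes "v \<in> V" and "2 \<le> D" and "n < D"
  shows "pc_derivable True (x_system V E k) D (vertex_form k c v ^ n - vertex_form k (\<lambda>j. c j ^ n) v)"
  using assms(3)
proof (induction n)
  case 0
  have "pc_derivable True (x_system V E k) D ((\<Sum>j\<in>{1..k}. mvar (v, j)) - 1 :: ('v \<times> nat, 'a) mpoly)"
    using assms(1,2) by (intro pc_derivable_x_vertex) auto
  thus ?case
    using pc_derivable_diff[OF pc_derivable_zero] by (fastforce simp: vertex_form_def)
next
  case (Suc n)
  have "tdeg (vertex_form k c v ^ n - vertex_form k (\<lambda>j. c j ^ n) v) \<le> Suc n"
    using tdeg_vertex_form_power_le[of k c v n] tdeg_vertex_form_le[of k "\<lambda>j. c j ^ n" v]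
    by (intro tdeg_diff_le) auto
  hence "pc_derivable True (x_system V E k) D
      (vertex_form k c v * (vertex_form k c v ^ n - vertex_form k (\<lambda>j. c j ^ n) v))"
    using Suc by (intro pc_derivable_vertex_form_mult) auto
  moreover have "pc_derivable True (x_system V E k) D
      (vertex_form k c v * vertex_form k (\<lambda>j. c j ^ n) v - vertex_form k (\<lambda>j. c j * c j ^ n) v)"
    using assms(1,2) by (rule pc_derivable_vertex_form_mult_reduce)
  ultimately show ?case
    using pc_derivable_add by (fastforce simp: algebra_simps)
qed

lemma pc_derivable_vertex_image:
  fixes V :: "'v set" and w :: "'a::comm_ring_1"
  assumes "v \<in> V" and "2 \<le> D" and "k < D" and "w ^ k = 1"
  shows "pc_derivable True (x_system V E k) D (vertex_form k (\<lambda>j. w ^ j) v ^ k - 1)"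
proof -
  have "(w ^ j) ^ k = 1" for j
    by (metis assms(4) mult.commute power_mult power_one)
  hence "vertex_form k (\<lambda>j. (w ^ j) ^ k) v = (\<Sum>j\<in>{1..k}. mvar (v, j))"
    by (simp add: vertex_form_def)
  moreover have "pc_derivable True (x_system V E k) D
      (vertex_form k (\<lambda>j. w ^ j) v ^ k - vertex_form k (\<lambda>j. (w ^ j) ^ k) v)"
    using assms(1-3) by (rule pc_derivable_vertex_form_power)
  moreover have "pc_derivable True (x_system V E k) D ((\<Sum>j\<in>{1..k}. mvar (v, j)) - 1 :: ('v \<times> nat, 'a) mpoly)"
    using assms(1,2) by (intro pc_derivable_x_vertex) auto
  ultimately show ?thesis
    using pc_derivable_add by fastforce
qed


lemma pc_derivable_edge_term:
  fixes V :: "'v set" and c :: "nat \<Rightarrow> 'a::comm_ring_1"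
  assumes "u \<in> V" and "v \<in> V" and "2 \<le> D" and "k < D" and "i < k"
  shows "pc_derivable True (x_system V E k) D
    (vertex_form k c u ^ i * vertex_form k c v ^ (k - 1 - i)
      - vertex_form k (\<lambda>j. c j ^ i) u * vertex_form k (\<lambda>j. c j ^ (k - 1 - i)) v)"
proof -
  let ?m = "k - 1 - i"
  let ?a = "vertex_form k c u ^ i" and ?a' = "vertex_form k (\<lambda>j. c j ^ i) u"
  let ?b = "vertex_form k c v ^ ?m" and ?b' = "vertex_form k (\<lambda>j. c j ^ ?m) v"
  have "pc_derivable True (x_system V E k) D (?b * (?a - ?a'))"
  proof (rule pc_derivable_vertex_form_power_mult)
    show "pc_derivable True (x_system V E k) D (?a - ?a')"
      using assms by (intro pc_derivable_vertex_form_power) auto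
    have "tdeg (?a - ?a') \<le> i + 1"
      using tdeg_vertex_form_power_le[of k c u i] tdeg_vertex_form_le[of k "\<lambda>j. c j ^ i" u]
      by (intro tdeg_diff_le) auto
    thus "tdeg (?a - ?a') + ?m \<le> D"
      using assms(4,5) by linarith
  qed
  moreover have "pc_derivable True (x_system V E k) D (?a' * (?b - ?b'))"
  proof (rule pc_derivable_vertex_form_mult)
    show "pc_derivable True (x_system V E k) D (?b - ?b')"
      using assms by (intro pc_derivable_vertex_form_power) auto
    have "tdeg (?b - ?b') \<le> ?m + 1"
      using tdeg_vertex_form_power_le[of k c v ?m] tdeg_vertex_form_le[of k "\<lambda>j. c j ^ ?m" v]
      by (intro tdeg_diff_le) auto
    thus "tdeg (?b - ?b') < D"
      using assms(4,5) by linarith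
  qed
  moreover have "?a * ?b - ?a' * ?b' = ?b * (?a - ?a') + ?a' * (?b - ?b')"
    by (simp add: algebra_simps)
  ultimately show ?thesis
    using pc_derivable_add by metis
qed

lemma vertex_form_edge_sum:
  "(\<Sum>i<k. vertex_form k (\<lambda>j. c j ^ i) u * vertex_form k (\<lambda>j. c j ^ (k - 1 - i)) v) =
   (\<Sum>j\<in>{1..k}. \<Sum>j'\<in>{1..k}.
      mconst (\<Sum>i<k. c j ^ i * c j' ^ (k - 1 - i)) * (mvar (u, j) * mvar (v, j')))"
proof -
  let ?t = "\<lambda>i j j'. mconst (c j ^ i * c j' ^ (k - 1 - i)) * (mvar (u, j) * mvar (v, j'))"
  have "(\<Sum>i<k. vertex_form k (\<lambda>j. c j ^ i) u * vertex_form k (\<lambda>j. c j ^ (k - 1 - i)) v) =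
      (\<Sum>i<k. \<Sum>j\<in>{1..k}. \<Sum>j'\<in>{1..k}. ?t i j j')"
    unfolding vertex_form_def sum_product by (simp add: mconst_mult mult_ac)
  also have "\<dots> = (\<Sum>j\<in>{1..k}. \<Sum>i<k. \<Sum>j'\<in>{1..k}. ?t i j j')"
    by (rule sum.swap)
  also have "\<dots> = (\<Sum>j\<in>{1..k}. \<Sum>j'\<in>{1..k}. \<Sum>i<k. ?t i j j')"
    by (rule sum.cong[OF refl], rule sum.swap)
  finally show ?thesis
    by (simp add: mconst_sum sum_distrib_right)
qed

lemma pc_derivable_edge_image:
  fixes V :: "'v set" and w :: "'a::idom"
  assumes "{u, v} \<in> E" and "u \<in> V" and "v \<in> V" and "2 \<le> D" and "k < D"
    and w: "primitive_root_of_unity k w"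
  shows "pc_derivable True (x_system V E k) D
    (\<Sum>i<k. vertex_form k (\<lambda>j. w ^ j) u ^ i * vertex_form k (\<lambda>j. w ^ j) v ^ (k - 1 - i))"
proof -
  let ?X = "x_system V E k :: ('v \<times> nat, 'a) mpoly set"
  have zero: "pc_derivable True ?X D 0"
    using pc_derivable_zero[OF pc_derivable_boolean[OF assms(4)]] .
  have "pc_derivable True ?X D (\<Sum>i<k.
      vertex_form k (\<lambda>j. w ^ j) u ^ i * vertex_form k (\<lambda>j. w ^ j) v ^ (k - 1 - i)
      - vertex_form k (\<lambda>j. (w ^ j) ^ i) u * vertex_form k (\<lambda>j. (w ^ j) ^ (k - 1 - i)) v)"
    using assms(2-5) by (intro pc_derivable_sum[OF zero] pc_derivable_edge_term) auto
  moreover have "pc_derivable True ?X D (\<Sum>i<k.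
      vertex_form k (\<lambda>j. (w ^ j) ^ i) u * vertex_form k (\<lambda>j. (w ^ j) ^ (k - 1 - i)) v)"
    unfolding vertex_form_edge_sum
  proof (intro pc_derivable_sum[OF zero])
    fix j j'
    assume j: "j \<in> {1..k}" "j' \<in> {1..k}"
    show "pc_derivable True ?X D
        (mconst (\<Sum>i<k. (w ^ j) ^ i * (w ^ j') ^ (k - 1 - i)) * (mvar (u, j) * mvar (v, j')))"
    proof (cases "j = j'")
      case True
      show ?thesis
        unfolding True using assms(1,4) j by (intro pc_derivable_smult pc_derivable_x_edge) auto
    next
      case False
      \<comment> \<open>off the diagonal the coefficient is a geometric sum over two distinct \<open>k\<close>-th roots of unity\<close>
      have "(w ^ i) ^ k = 1" for i
        using w by (metis mult.commute power_mult power_one primitive_root_of_unity_def)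
      moreover have "w ^ j \<noteq> w ^ j'"
        using primitive_root_of_unity_inj_on[OF w] j False by (auto dest: inj_onD)
      ultimately have "(\<Sum>i<k. (w ^ j) ^ i * (w ^ j') ^ (k - 1 - i)) = 0"
        by (intro distinct_roots_of_unity_sum)
      thus ?thesis
        using zero by simp
    qed
  qed
  ultimately show ?thesis
    using pc_derivable_add by (fastforce simp: sum_subtractf)
qed

lemma pc_derivable_y_system_image:
  fixes V :: "'v set" and g :: "'a::comm_ring_1 \<Rightarrow> 'b::idom"
  assumes "comm_ring_hom g" and "simple_graph V E" and w: "primitive_root_of_unity k w"
    and "2 \<le> D" and "k < D" and "p \<in> y_system V E k"
  shows "pc_derivable True (x_system V E k) D
    (mpoly_eval (\<lambda>c. mconst (g c)) (vertex_form k (\<lambda>j. w ^ j)) p)"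
proof -
  interpret coeff: comm_ring_hom "\<lambda>c. mconst (g c) :: ('v \<times> nat, 'b) mpoly"
    using assms(1) by (rule comm_ring_hom_mconst)
  from assms(6) consider (vertex) v where "v \<in> V" "p = mvar v ^ k - 1"
    | (edge) u v where "{u, v} \<in> E" "p = (\<Sum>j<k. mvar u ^ j * mvar v ^ (k - 1 - j))"
    unfolding y_system_def by blast
  thus ?thesis
  proof cases
    case vertex
    have "w ^ k = 1"
      using w by (simp add: primitive_root_of_unity_def)
    thus ?thesis
      using pc_derivable_vertex_image[OF vertex(1) assms(4,5)] vertex(2)
      by (simp add: coeff.mpoly_eval_diff coeff.mpoly_eval_power coeff.mpoly_eval_mvar)
  next
    case edge
    moreover have "u \<in> V" and "v \<in> V"
      using edge(1) assms(2) unfolding simple_graph_def by auto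
    ultimately show ?thesis
      using pc_derivable_edge_image[OF _ _ _ assms(4,5) w]
      by (simp add: coeff.mpoly_eval_sum coeff.mpoly_eval_mult coeff.mpoly_eval_power
          coeff.mpoly_eval_mvar)
  qed
qed

theorem proposition2p2:
  fixes V :: "'v set" and E :: "'v set set" and k d :: nat
  assumes "simple_graph V E"
    and "k > 0"
    and "CHAR('a::field) = 0 \<or> \<not> CHAR('a) dvd k"
    and "pc_refutation False (y_system V E k :: ('v, 'a) mpoly set) d"
  shows "\<exists>w :: 'a alg_closure. primitive_root_of_unity k w \<and>
           pc_refutation True (x_system V E k :: ('v \<times> nat, 'a alg_closure) mpoly set) (max (2 * k) d)"
proof -
  have "of_nat k \<noteq> (0 :: 'a alg_closure)"
    using assms(2,3) by (auto simp: of_nat_eq_0_iff_char_dvd)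
  then obtain w :: "'a alg_closure" where w: "primitive_root_of_unity k w"
    using primitive_root_of_unity_exists assms(2) by blast
  define D where "D = max (2 * k) d"
  have D: "2 \<le> D" "k < D" "d \<le> D"
    using assms(2) by (auto simp: D_def)
  have "pc_refutation True (x_system V E k :: ('v \<times> nat, 'a alg_closure) mpoly set) D"
  proof (rule pc_refutation_mpoly_eval[OF comm_ring_hom_to_ac _ _ _ D(3) assms(4)])
    show "tdeg (vertex_form k (\<lambda>j. w ^ j) v) \<le> 1" for v
      by (rule tdeg_vertex_form_le)
    show "pc_derivable True (x_system V E k) D (vertex_form k (\<lambda>j. w ^ j) v * r)"
      if "pc_derivable True (x_system V E k) D r" and "tdeg r < D" for v r
      using that by (rule pc_derivable_vertex_form_mult)
    show "pc_derivable True (x_system V E k) D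
        (mpoly_eval (\<lambda>c. mconst (to_ac c)) (vertex_form k (\<lambda>j. w ^ j)) p)"
      if "p \<in> y_system V E k" for p
      using comm_ring_hom_to_ac assms(1) w D(1,2) that by (rule pc_derivable_y_system_image)
  qed
  thus ?thesis
    using w unfolding D_def by blast
qed

end
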